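(* Let $D$ be a strong digraph with $D\in\mathcal{LE}_2$. Then $2\leq \overrightarrow{\chi}(D)\leq 3$.
   Context: All digraphs are finite, without loops or multiple arcs. Paths and cycles are directed; the length of a path or cycle is its number of arcs. The dichromatic number $\overrightarrow{\chi}(D)$ is the least $k$ such that $V(D)$ can be partitioned into $k$ classes each inducing an acyclic subdigraph (one with no directed cycle; a pair of opposite arcs counts as a directed cycle of length 2). A digraph is strong if for every ordered pair of vertices $x,y$ there is a directed path from $x$ to $y$. For a subdigraph $H$ of a digraph $D$, an ear of $H$ in $D$ is either a directed path in $D$ whose two end vertices lie in $H$ and whose internal vertices do not lie in $H$, or a directed cycle in $D$ having exactly one vertex in $H$. An ear decomposition of a strong digraph $D$ is a sequence $(D_0,D_1,\ldots,D_k)$ of strong subdigraphs of $D$ such that $D_0$ is a directed cycle, $D_{j+1}=D_j\cup P_j$ where $P_j$ is an ear of $D_j$ in $D$ for every $j\in\{0,\ldots,k-1\}$, and $D_k=D$. For an integer $i\geq 1$, $\mathcal{LE}_i$ denotes the family of strong digraphs having an ear decomposition in which every ear has length at least $i$. *)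

theory Defs
  imports Main
begin

definition digraph :: "'a set \<Rightarrow> ('a \<times> 'a) set \<Rightarrow> bool" where
  "digraph V A \<longleftrightarrow> finite V \<and> A \<subseteq> V \<times> V \<and> (\<forall>v. (v, v) \<notin> A)"

definition strong :: "'a set \<Rightarrow> ('a \<times> 'a) set \<Rightarrow> bool" where
  "strong V A \<longleftrightarrow> (\<forall>x\<in>V. \<forall>y\<in>V. (x, y) \<in> (A \<inter> V \<times> V)\<^sup>*)"

text \<open>A directed path is given by its list of distinct vertices; its length
(number of arcs) is length p - 1. Its arc set is path_arcs p.\<close>
definition path_arcs :: "'a list \<Rightarrow> ('a \<times> 'a) set" where
  "path_arcs p = set (zip p (tl p))"

definition is_path :: "('a \<times> 'a) set \<Rightarrow> 'a list \<Rightarrow> bool" where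
  "is_path A p \<longleftrightarrow> p \<noteq> [] \<and> distinct p \<and> path_arcs p \<subseteq> A"

text \<open>A directed cycle is given by its list of distinct vertices
[v0,...,v(k-1)], k \<ge> 2, with arcs v_i v_(i+1) and v_(k-1) v_0; its length is k.
A pair of opposite arcs is a cycle of length 2.\<close>
definition cycle_arcs :: "'a list \<Rightarrow> ('a \<times> 'a) set" where
  "cycle_arcs c = set (zip c (rotate1 c))"

definition is_cycle :: "('a \<times> 'a) set \<Rightarrow> 'a list \<Rightarrow> bool" where
  "is_cycle A c \<longleftrightarrow> length c \<ge> 2 \<and> distinct c \<and> cycle_arcs c \<subseteq> A"

definition ear_path :: "'a set \<Rightarrow> ('a \<times> 'a) set \<Rightarrow> 'a set \<Rightarrow> 'a list \<Rightarrow> bool" where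
  "ear_path V A VH p \<longleftrightarrow> is_path A p \<and> set p \<subseteq> V \<and> length p \<ge> 2 \<and>
     hd p \<in> VH \<and> last p \<in> VH \<and> (\<forall>v \<in> set (butlast (tl p)). v \<notin> VH)"

definition ear_cycle :: "'a set \<Rightarrow> ('a \<times> 'a) set \<Rightarrow> 'a set \<Rightarrow> 'a list \<Rightarrow> bool" where
  "ear_cycle V A VH c \<longleftrightarrow> is_cycle A c \<and> set c \<subseteq> V \<and> card (set c \<inter> VH) = 1"

text \<open>Subdigraphs (VH, AH) of D = (V, A) that arise as some D_j of an ear
decomposition in which every ear has length at least i. Every D_j is required
to be strong, as in the definition.\<close>
inductive long_ear_sub :: "nat \<Rightarrow> 'a set \<Rightarrow> ('a \<times> 'a) set \<Rightarrow> 'a set \<Rightarrow> ('a \<times> 'a) set \<Rightarrow> bool"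
  for i :: nat and V :: "'a set" and A :: "('a \<times> 'a) set" where
  start: "\<lbrakk> is_cycle A c; set c \<subseteq> V \<rbrakk> \<Longrightarrow> long_ear_sub i V A (set c) (cycle_arcs c)"
| add_path: "\<lbrakk> long_ear_sub i V A VH AH; ear_path V A VH p; length p - 1 \<ge> i;
               strong (VH \<union> set p) (AH \<union> path_arcs p) \<rbrakk>
             \<Longrightarrow> long_ear_sub i V A (VH \<union> set p) (AH \<union> path_arcs p)"
| add_cycle: "\<lbrakk> long_ear_sub i V A VH AH; ear_cycle V A VH c; length c \<ge> i;
               strong (VH \<union> set c) (AH \<union> cycle_arcs c) \<rbrakk>
             \<Longrightarrow> long_ear_sub i V A (VH \<union> set c) (AH \<union> cycle_arcs c)"

definition LE :: "nat \<Rightarrow> 'a set \<Rightarrow> ('a \<times> 'a) set \<Rightarrow> bool" where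
  "LE i V A \<longleftrightarrow> strong V A \<and> long_ear_sub i V A V A"

definition acyclic_set :: "('a \<times> 'a) set \<Rightarrow> 'a set \<Rightarrow> bool" where
  "acyclic_set A S \<longleftrightarrow> \<not> (\<exists>c. is_cycle A c \<and> set c \<subseteq> S)"

definition dicolourable :: "'a set \<Rightarrow> ('a \<times> 'a) set \<Rightarrow> nat \<Rightarrow> bool" where
  "dicolourable V A k \<longleftrightarrow> (\<exists>f :: 'a \<Rightarrow> nat. (\<forall>v\<in>V. f v < k) \<and>
       (\<forall>j<k. acyclic_set A {v\<in>V. f v = j}))"

definition dichromatic :: "'a set \<Rightarrow> ('a \<times> 'a) set \<Rightarrow> nat" where
  "dichromatic V A = (LEAST k. dicolourable V A k)"

end

theory Submission
  imports Defs
begin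

(*
  An ear of length at least 2 has an internal vertex, so every arc it adds is incident with a
  new vertex and the subdigraph induced by the old vertices does not change. Give all internal
  vertices of a new ear u ... w one colour different from the colour of w. A monochromatic cycle
  through a new vertex must then follow the ear to w, since the internal vertices have no other
  out-arcs yet; a cycle avoiding the new vertices lies in the old digraph. Hence every digraph in
  LE_2 is 2-dicolourable, and as it contains a cycle its dichromatic number is exactly 2.
*)

lemma path_arcs_Cons: "l \<noteq> [] \<Longrightarrow> path_arcs (a # l) = insert (a, hd l) (path_arcs l)"
  by (cases l) (simp_all add: path_arcs_def)

lemma path_arcs_fst: "(x, y) \<in> path_arcs p \<Longrightarrow> x \<in> set (butlast p)"
  unfolding path_arcs_def by (induction p rule: induct_list012) auto

lemma path_arcs_subset: "path_arcs p \<subseteq> set p \<times> set p"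
  unfolding path_arcs_def by (cases p) (auto dest: set_zip_leftD set_zip_rightD)

lemma cycle_arcs_subset: "cycle_arcs c \<subseteq> set c \<times> set c"
  unfolding cycle_arcs_def by (auto dest: set_zip_leftD set_zip_rightD)

lemma cycle_arcs_rotate1 [simp]: "cycle_arcs (rotate1 c) = cycle_arcs c"
proof (cases c)
  case (Cons a l)
  then show ?thesis
  proof (cases l)
    case (Cons b m)
    have "zip ((b # m) @ [a]) ((m @ [a]) @ [b]) = zip (b # m) (m @ [a]) @ [(a, b)]"
      using zip_append[of "b # m" "m @ [a]" "[a]" "[b]"] by simp
    then show ?thesis using \<open>c = a # l\<close> Cons by (auto simp: cycle_arcs_def)
  qed (simp add: cycle_arcs_def)
qed simp

lemma cycle_arcs_rotate: "cycle_arcs (rotate n c) = cycle_arcs c"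
  by (induction n) simp_all

lemma cycle_arcs_Cons: "cycle_arcs (v # xs) = path_arcs (v # xs @ [v])"
  using zip_append1[of "v # xs" "[v]" "xs @ [v]"] by (simp add: cycle_arcs_def path_arcs_def)

lemma is_cycle_successor:
  assumes "is_cycle E c" and "x \<in> set c"
  shows "\<exists>y\<in>set c. (x, y) \<in> E"
proof -
  obtain i where i: "i < length c" "x = c ! i" using \<open>x \<in> set c\<close> by (auto simp: in_set_conv_nth)
  then have "(x, rotate1 c ! i) \<in> cycle_arcs c" by (auto simp: cycle_arcs_def set_zip)
  moreover have "rotate1 c ! i \<in> set c" using i nth_mem[of i "rotate1 c"] by simp
  ultimately show ?thesis using \<open>is_cycle E c\<close> unfolding is_cycle_def by blast
qed

lemma is_cycle_as_closed_ear:
  assumes "is_cycle E c" and "v \<in> set c"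
  obtains xs where "cycle_arcs c = path_arcs (v # xs @ [v])" and "set c = insert v (set xs)"
    and "xs \<noteq> []" and "distinct xs" and "v \<notin> set xs"
proof -
  obtain ys zs where c: "c = ys @ v # zs" using split_list \<open>v \<in> set c\<close> by metis
  have "rotate (length ys) c = v # zs @ ys" by (simp add: c rotate_append)
  then have "cycle_arcs c = path_arcs (v # (zs @ ys) @ [v])"
    by (metis cycle_arcs_rotate cycle_arcs_Cons)
  moreover have "set c = insert v (set (zs @ ys))" using c by auto
  moreover have "zs @ ys \<noteq> []" "distinct (zs @ ys)" "v \<notin> set (zs @ ys)"
    using \<open>is_cycle E c\<close> c unfolding is_cycle_def by auto
  ultimately show ?thesis by (rule that)
qed

lemma ear_path_split:
  assumes "ear_path V A VH p" and "3 \<le> length p"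
  obtains u xs w where "p = u # xs @ [w]" and "u \<in> VH" and "w \<in> VH" and "xs \<noteq> []"
    and "distinct xs" and "set xs \<inter> VH = {}"
proof
  show p: "p = hd p # butlast (tl p) @ [last p]"
    using \<open>3 \<le> length p\<close> by (cases p) (auto simp: last_tl)
  show "hd p \<in> VH" "last p \<in> VH" "set (butlast (tl p)) \<inter> VH = {}"
    using assms(1) unfolding ear_path_def by auto
  show "butlast (tl p) \<noteq> []" using \<open>3 \<le> length p\<close> by (simp flip: length_0_conv)
  show "distinct (butlast (tl p))"
    using assms(1) p unfolding ear_path_def is_path_def by (metis distinct.simps(2) distinct_append)
qed

lemma ear_arc_meets_interior:
  assumes "xs \<noteq> []" and "(a, b) \<in> path_arcs (u # xs @ [w])"
  shows "a \<in> set xs \<or> b \<in> set xs"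
  using assms path_arcs_fst[of a b "xs @ [w]"] by (auto simp: path_arcs_Cons)

lemma successor_closed_reaches_last:
  assumes closed: "\<forall>x\<in>S. \<exists>y\<in>S. (x, y) \<in> E"
    and forced: "\<forall>x\<in>set xs. \<forall>y. (x, y) \<in> E \<longrightarrow> (x, y) \<in> path_arcs (xs @ [w])"
    and "distinct (xs @ [w])" and "x \<in> set xs" and "x \<in> S"
  shows "w \<in> S"
  using assms(2-)
proof (induction xs arbitrary: x)
  case (Cons a ys)
  have step: "hd (ys @ [w]) \<in> S" if "a \<in> S"
  proof -
    obtain y where y: "y \<in> S" "(a, y) \<in> E" using closed \<open>a \<in> S\<close> by blast
    then have "(a, y) \<in> insert (a, hd (ys @ [w])) (path_arcs (ys @ [w]))"
      using Cons.prems(1) by (simp add: path_arcs_Cons)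
    moreover have "(a, y) \<notin> path_arcs (ys @ [w])"
      using Cons.prems(2) path_arcs_fst by fastforce
    ultimately show ?thesis using y by simp
  qed
  have IH: "w \<in> S" if "x' \<in> set ys" "x' \<in> S" for x'
  proof (rule Cons.IH[OF _ _ that])
    show "\<forall>x\<in>set ys. \<forall>y. (x, y) \<in> E \<longrightarrow> (x, y) \<in> path_arcs (ys @ [w])"
      using Cons.prems(1,2) by (auto simp: path_arcs_Cons)
  qed (use Cons.prems(2) in simp)
  show ?case
  proof (cases "x = a")
    case True
    then show ?thesis using step Cons.prems(4) IH by (cases ys) auto
  next
    case False
    then show ?thesis using IH Cons.prems(3,4) by simp
  qed
qed simp

lemma dicolourable_no_arcs:
  assumes "0 < k"
  shows "dicolourable V {} k"
proof -
  have "\<not> is_cycle {} c" for c :: "'a list"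
    using is_cycle_successor[of "{}" c "hd c"] by (cases c) (auto simp: is_cycle_def)
  then show ?thesis using assms unfolding dicolourable_def acyclic_set_def by auto
qed

lemma dicolourable_add_ear:
  assumes col: "dicolourable VH AH k" and "2 \<le> k" and AH: "AH \<subseteq> VH \<times> VH"
    and "u \<in> VH" and "w \<in> VH" and "xs \<noteq> []" and "distinct xs" and new: "set xs \<inter> VH = {}"
  shows "dicolourable (VH \<union> set xs) (AH \<union> path_arcs (u # xs @ [w])) k"
proof -
  obtain f where f_range: "\<forall>v\<in>VH. f v < k" and f_acyclic: "\<forall>j<k. acyclic_set AH {v\<in>VH. f v = j}"
    using col unfolding dicolourable_def by blast
  define c\<^sub>0 :: nat where "c\<^sub>0 = (if f w = 0 then 1 else 0)"
  define g where "g x = (if x \<in> VH then f x else c\<^sub>0)" for x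
  let ?E = "AH \<union> path_arcs (u # xs @ [w])"
  have "acyclic_set ?E {v \<in> VH \<union> set xs. g v = j}" if "j < k" for j
    unfolding acyclic_set_def
  proof
    assume "\<exists>c. is_cycle ?E c \<and> set c \<subseteq> {v \<in> VH \<union> set xs. g v = j}"
    then obtain c where c: "is_cycle ?E c" and c_col: "set c \<subseteq> {v \<in> VH \<union> set xs. g v = j}"
      by blast
    show False
    proof (cases "set c \<inter> set xs = {}")
      case False
      then obtain x where x: "x \<in> set xs" "x \<in> set c" by blast
      have "\<forall>x\<in>set xs. \<forall>y. (x, y) \<in> ?E \<longrightarrow> (x, y) \<in> path_arcs (xs @ [w])"
        using AH new \<open>u \<in> VH\<close> \<open>xs \<noteq> []\<close> by (auto simp: path_arcs_Cons)
      moreover have "distinct (xs @ [w])" using \<open>distinct xs\<close> new \<open>w \<in> VH\<close> by auto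
      ultimately have "w \<in> set c"
        using successor_closed_reaches_last[OF _ _ _ x] is_cycle_successor[OF c] by blast
      then have "f w = j" using c_col \<open>w \<in> VH\<close> by (auto simp: g_def)
      moreover have "g x = j" and "x \<notin> VH" using c_col x new by auto
      then have "c\<^sub>0 = j" by (simp add: g_def)
      ultimately show False by (simp add: c\<^sub>0_def split: if_splits)
    next
      case True
      then have c_old: "set c \<subseteq> {v\<in>VH. f v = j}" using c_col by (auto simp: g_def)
      have "cycle_arcs c \<subseteq> AH"
        using c True c_old cycle_arcs_subset[of c] ear_arc_meets_interior[OF \<open>xs \<noteq> []\<close>]
        unfolding is_cycle_def by fastforce
      then have "is_cycle AH c" using c unfolding is_cycle_def by blast
      then show False using f_acyclic \<open>j < k\<close> c_old unfolding acyclic_set_def by blast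
    qed
  qed
  moreover have "\<forall>v\<in>VH \<union> set xs. g v < k" using f_range \<open>2 \<le> k\<close> by (auto simp: g_def c\<^sub>0_def)
  ultimately show ?thesis unfolding dicolourable_def by blast
qed

lemma long_ear_sub_arcs_subset: "long_ear_sub i V A VH AH \<Longrightarrow> AH \<subseteq> VH \<times> VH"
  by (induction rule: long_ear_sub.induct)
    (use cycle_arcs_subset path_arcs_subset in fastforce)+

lemma long_ear_sub_has_cycle: "long_ear_sub i V A VH AH \<Longrightarrow> \<exists>c. is_cycle A c \<and> set c \<subseteq> VH"
  by (induction rule: long_ear_sub.induct) auto

lemma long_ear_sub_dicolourable:
  assumes "2 \<le> i" and "2 \<le> k"
  shows "long_ear_sub i V A VH AH \<Longrightarrow> dicolourable VH AH k"
proof (induction rule: long_ear_sub.induct)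
  case (start c)
  \<comment> \<open>The initial cycle is a closed ear of the digraph consisting of one of its vertices.\<close>
  obtain xs where xs: "cycle_arcs c = path_arcs (hd c # xs @ [hd c])" "set c = insert (hd c) (set xs)"
    "xs \<noteq> []" "distinct xs" "hd c \<notin> set xs"
  proof (rule is_cycle_as_closed_ear[OF start(1)])
    show "hd c \<in> set c" using start(1) by (cases c) (auto simp: is_cycle_def)
  qed
  have "dicolourable ({hd c} \<union> set xs) ({} \<union> path_arcs (hd c # xs @ [hd c])) k"
    by (rule dicolourable_add_ear) (use xs \<open>2 \<le> k\<close> dicolourable_no_arcs[of k] in auto)
  then show ?case using xs by simp
next
  case (add_path VH AH p)
  obtain u xs w where p: "p = u # xs @ [w]" "u \<in> VH" "w \<in> VH" "xs \<noteq> []" "distinct xs"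
    "set xs \<inter> VH = {}"
  proof (rule ear_path_split[OF add_path(2)])
    show "3 \<le> length p" using add_path(3) \<open>2 \<le> i\<close> by linarith
  qed
  have "dicolourable (VH \<union> set xs) (AH \<union> path_arcs p) k"
    unfolding p by (rule dicolourable_add_ear)
      (use add_path.IH p \<open>2 \<le> k\<close> long_ear_sub_arcs_subset[OF add_path(1)] in auto)
  moreover have "VH \<union> set p = VH \<union> set xs" using p by auto
  ultimately show ?case by simp
next
  case (add_cycle VH AH c)
  obtain v where v: "set c \<inter> VH = {v}"
    using add_cycle(2) card_1_singletonE unfolding ear_cycle_def by blast
  obtain xs where xs: "cycle_arcs c = path_arcs (v # xs @ [v])" "set c = insert v (set xs)"
    "xs \<noteq> []" "distinct xs" "v \<notin> set xs"
    using is_cycle_as_closed_ear[of A c v] add_cycle(2) v unfolding ear_cycle_def by blast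
  have "dicolourable (VH \<union> set xs) (AH \<union> path_arcs (v # xs @ [v])) k"
    by (rule dicolourable_add_ear)
      (use add_cycle.IH xs v \<open>2 \<le> k\<close> long_ear_sub_arcs_subset[OF add_cycle(1)] in auto)
  moreover have "VH \<union> set c = VH \<union> set xs" using xs v by auto
  ultimately show ?case using xs by simp
qed

lemma dicolourable_cycle_two_le:
  assumes "dicolourable V A k" and "is_cycle A c" and "set c \<subseteq> V"
  shows "2 \<le> k"
proof (rule ccontr)
  assume "\<not> 2 \<le> k"
  obtain f where f: "\<forall>v\<in>V. f v < k" "\<forall>j<k. acyclic_set A {v\<in>V. f v = j}"
    using assms(1) unfolding dicolourable_def by blast
  have "c \<noteq> []" using assms(2) unfolding is_cycle_def by auto
  then have "f (hd c) < k" using f(1) assms(3) hd_in_set by blast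
  then have "k = 1" using \<open>\<not> 2 \<le> k\<close> by simp
  then have "set c \<subseteq> {v\<in>V. f v = 0}" using f(1) assms(3) by auto
  then show False using f(2) \<open>k = 1\<close> assms(2) unfolding acyclic_set_def by blast
qed

theorem mainTheorem15:
  fixes V :: "'a set" and A :: "('a \<times> 'a) set"
  assumes "digraph V A" and "strong V A" and "LE 2 V A"
  shows "2 \<le> dichromatic V A \<and> dichromatic V A \<le> 3"
proof -
  have ears: "long_ear_sub 2 V A V A" using assms(3) unfolding LE_def by blast
  then have two: "dicolourable V A 2" using long_ear_sub_dicolourable[of 2 2] by simp
  obtain c where "is_cycle A c" "set c \<subseteq> V" using long_ear_sub_has_cycle[OF ears] by blast
  moreover have "dicolourable V A (dichromatic V A)"
    unfolding dichromatic_def using two by (rule LeastI)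
  ultimately have "2 \<le> dichromatic V A" using dicolourable_cycle_two_le by blast
  moreover have "dichromatic V A \<le> 2" unfolding dichromatic_def using two by (rule Least_le)
  ultimately show ?thesis by simp
qed

end
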